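(* Let $\beta>0$, $x=\tanh\beta$, and let $\sigma$ be distributed according to the Ising measure $\mathbb{I}_{0,\beta}$ on $\{1,\dots,n\}$. For every $r\ge1$ and indices $1\le i_1\le i_2\le\dots\le i_{2r}\le n$, $$\big|\kappa(\sigma(i_1),\dots,\sigma(i_{2r}))\big|\le(2r-2)!\;x^{\,i_{2r}+(i_{2r-1}-i_{2r-2})+(i_{2r-3}-i_{2r-4})+\cdots+(i_3-i_2)-i_1}.$$
   Context: The Ising measure $\mathbb{I}_{0,\beta}$ gives to $\sigma:\{1,\dots,n\}\to\{\pm1\}$ probability proportional to $\exp(\beta\sum_{i=1}^{n-1}\sigma(i)\sigma(i+1))$. The joint cumulant is $\kappa(X_1,\dots,X_s)=\sum_{\Pi}(-1)^{\ell(\Pi)-1}(\ell(\Pi)-1)!\prod_{A\in\Pi}\mathbb{E}[\prod_{j\in A}X_j]$, the sum over set partitions $\Pi$ of $\{1,\dots,s\}$ with $\ell(\Pi)$ blocks. *)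

theory Defs
  imports Complex_Main "HOL-Library.Disjoint_Sets"
begin

definition ising_configs :: "nat \<Rightarrow> (nat \<Rightarrow> int) set" where
  "ising_configs n = PiE {1..n} (\<lambda>_. {-1, 1})"

definition ising_weight :: "real \<Rightarrow> nat \<Rightarrow> (nat \<Rightarrow> int) \<Rightarrow> real" where
  "ising_weight \<beta> n \<sigma> = exp (\<beta> * (\<Sum>i = 1..<n. real_of_int (\<sigma> i * \<sigma> (i + 1))))"

definition ising_partition_fn :: "real \<Rightarrow> nat \<Rightarrow> real" where
  "ising_partition_fn \<beta> n = (\<Sum>\<sigma>\<in>ising_configs n. ising_weight \<beta> n \<sigma>)"

definition ising_expect :: "real \<Rightarrow> nat \<Rightarrow> ((nat \<Rightarrow> int) \<Rightarrow> real) \<Rightarrow> real" where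
  "ising_expect \<beta> n f =
     (\<Sum>\<sigma>\<in>ising_configs n. f \<sigma> * ising_weight \<beta> n \<sigma>) / ising_partition_fn \<beta> n"

definition joint_cumulant :: "(('c \<Rightarrow> real) \<Rightarrow> real) \<Rightarrow> ('c \<Rightarrow> real) list \<Rightarrow> real" where
  "joint_cumulant E Xs =
     (\<Sum>Q\<in>{P. partition_on {0..<length Xs} P}.
        (-1) ^ (card Q - 1) * fact (card Q - 1) *
        (\<Prod>A\<in>Q. E (\<lambda>\<omega>. \<Prod>j\<in>A. (Xs ! j) \<omega>)))"

end

theory Submission
  imports Defs
begin

text \<open>
  Write m = 2r and y_j = x ^ (i_j - i_(j-1)). The proof has four steps.
  (1) Summing out the spins one at a time along the chain shows that the moment
      E[prod_k sigma(k) ^ c_k] vanishes if sum_k c_k is odd, and otherwise equals x raised to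
      the number of bonds with an odd number of chosen spins on their left. For the spins of
      a set A of positions this is prod_j y_j ^ [card (A \<inter> {..<j}) odd].
  (2) Hence the cumulant, a Moebius-weighted sum over the set partitions Q of {..<m}, equals
      H(m, 0), where H(m, q) = odd_block_sum y m q sums the same weights over the partitions
      with exactly q odd blocks.
  (3) Inserting the new element m into a partition of {..<m} yields the recursion
      H(m+1, q) = (q+1) y_m^(q+1) H(m, q+1) - (q-1) y_m^(q-1) H(m, q-1).
  (4) Since 0 <= y_j <= 1, unrolling the recursion along lattice paths bounds |H(2r, 0)| by
      the Catalan number C_(r-1), times prod_j min j (2r-j), times prod_j y_j ^ gap j, where
      gap j is 1 for odd and 2 for even j; finally C_(r-1) * r! * (r-1)! = (2r-2)!.
\<close>

subsection \<open>Inserting a new element into a set partition\<close>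

definition partition_insert :: "'a \<Rightarrow> 'a set set \<Rightarrow> 'a set option \<Rightarrow> 'a set set" where
  "partition_insert a Q X =
     (case X of None \<Rightarrow> insert {a} Q | Some A \<Rightarrow> insert (insert a A) (Q - {A}))"

lemma partition_insert_partition:
  assumes Q: "partition_on S Q" and a: "a \<notin> S" and X: "X \<in> insert None (Some ` Q)"
  shows "partition_on (insert a S) (partition_insert a Q X)"
proof (cases X)
  case None
  then show ?thesis
    using Q a unfolding partition_insert_def partition_on_def pairwise_def disjnt_def by auto
next
  case (Some A)
  with X have "A \<in> Q" by auto
  with Some show ?thesis
    using Q a unfolding partition_insert_def partition_on_def pairwise_def disjnt_def
    by (auto; blast)
qed

lemma partition_insert_retract:
  assumes Q: "partition_on S Q" and a: "a \<notin> S" and X: "X \<in> insert None (Some ` Q)"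
  shows "(\<lambda>B. B - {a}) ` partition_insert a Q X - {{}} = Q"
proof -
  have "a \<notin> B" "B \<noteq> {}" if "B \<in> Q" for B
    using that Q a unfolding partition_on_def by auto
  then show ?thesis
    using X by (cases X) (auto simp: partition_insert_def image_iff)
qed

lemma partition_insert_inj:
  assumes a: "a \<notin> S"
  shows "inj_on (\<lambda>(Q, X). partition_insert a Q X)
           (SIGMA Q:{Q. partition_on S Q}. insert None (Some ` Q))"
proof (rule inj_onI)
  fix p p'
  assume "p \<in> (SIGMA Q:{Q. partition_on S Q}. insert None (Some ` Q))"
    and "p' \<in> (SIGMA Q:{Q. partition_on S Q}. insert None (Some ` Q))"
    and "(\<lambda>(Q, X). partition_insert a Q X) p = (\<lambda>(Q, X). partition_insert a Q X) p'"
  then obtain Q X Q' X' where pairs: "p = (Q, X)" "p' = (Q', X')"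
    and Q: "partition_on S Q" "X \<in> insert None (Some ` Q)"
    and Q': "partition_on S Q'" "X' \<in> insert None (Some ` Q')"
    and eq: "partition_insert a Q X = partition_insert a Q' X'"
    by (cases p; cases p') auto
  have "Q = Q'"
    using partition_insert_retract[OF Q(1) a Q(2)] partition_insert_retract[OF Q'(1) a Q'(2)] eq
    by simp
  moreover have "a \<notin> B" "B \<noteq> {}" if "B \<in> Q" for B
    using that Q(1) a unfolding partition_on_def by auto
  ultimately have "X = X'"
    using Q(2) Q'(2) eq by (cases X; cases X') (auto simp: partition_insert_def insert_eq_iff)
  with \<open>Q = Q'\<close> show "p = p'" using pairs by simp
qed

lemma partition_remove_blocks:
  assumes Q': "partition_on (insert a S) Q'" and B: "B \<in> Q'" "a \<in> B"
  shows "(\<lambda>C. C - {a}) ` Q' - {{}} = (Q' - {B}) \<union> ({B - {a}} - {{}})"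
proof -
  have other: "C \<inter> B = {}" "C - {a} = C" "C \<noteq> {}" if "C \<in> Q'" "C \<noteq> B" for C
    using Q' B that unfolding partition_on_def pairwise_def disjnt_def by auto
  show ?thesis
  proof (rule set_eqI)
    fix C
    show "C \<in> (\<lambda>C. C - {a}) ` Q' - {{}} \<longleftrightarrow> C \<in> (Q' - {B}) \<union> ({B - {a}} - {{}})"
    proof
      assume "C \<in> (\<lambda>C. C - {a}) ` Q' - {{}}"
      then obtain D where D: "D \<in> Q'" "C = D - {a}" "C \<noteq> {}" by auto
      show "C \<in> (Q' - {B}) \<union> ({B - {a}} - {{}})"
      proof (cases "D = B")
        case False
        with D other(2)[OF D(1)] show ?thesis by auto
      qed (use D in auto)
    next
      assume "C \<in> (Q' - {B}) \<union> ({B - {a}} - {{}})"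
      then consider "C \<in> Q'" "C \<noteq> B" | "C = B - {a}" "C \<noteq> {}" by blast
      then show "C \<in> (\<lambda>C. C - {a}) ` Q' - {{}}"
      proof cases
        case 1
        then have "C = C - {a}" "C \<noteq> {}" using other(2,3)[of C] by auto
        with 1 show ?thesis by blast
      next
        case 2
        with B show ?thesis by blast
      qed
    qed
  qed
qed

text \<open>Every partition of \<open>insert a S\<close> arises by insertion: delete \<open>a\<close> from its block \<open>B\<close>,
  and record whether \<open>B\<close> was the singleton \<open>{a}\<close>.\<close>

lemma partition_insert_surj:
  assumes a: "a \<notin> S" and Q': "partition_on (insert a S) Q'"
  shows "Q' \<in> (\<lambda>(Q, X). partition_insert a Q X) `
                (SIGMA Q:{Q. partition_on S Q}. insert None (Some ` Q))"
proof -
  define Q where "Q = (\<lambda>C. C - {a}) ` Q' - {{}}"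
  have "partition_on ((\<lambda>C. C - {a}) (insert a S)) Q"
    unfolding Q_def by (rule partition_on_transform[OF Q']) (auto simp: disjnt_def)
  then have Q: "partition_on S Q" using a by simp
  from Q' obtain B where B: "B \<in> Q'" "a \<in> B" unfolding partition_on_def by auto
  have Q_eq: "Q = (Q' - {B}) \<union> ({B - {a}} - {{}})"
    unfolding Q_def by (rule partition_remove_blocks[OF Q' B])
  define X where "X = (if B = {a} then None else Some (B - {a}))"
  have X: "X \<in> insert None (Some ` Q)"
    using B unfolding X_def Q_eq by auto
  have "partition_insert a Q X = Q'"
  proof (cases "B = {a}")
    case True
    then have "Q = Q' - {B}" unfolding Q_eq by simp
    then show ?thesis using B True unfolding X_def partition_insert_def by auto
  next
    case False
    then have "B - {a} \<noteq> {}" "B - {a} \<noteq> B" using B by auto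
    have "B - {a} \<notin> Q'"
    proof
      assume "B - {a} \<in> Q'"
      with Q' B \<open>B - {a} \<noteq> B\<close> have "(B - {a}) \<inter> B = {}"
        unfolding partition_on_def pairwise_def disjnt_def by auto
      with \<open>B - {a} \<noteq> {}\<close> show False by auto
    qed
    then have "Q - {B - {a}} = Q' - {B}" "insert a (B - {a}) = B"
      unfolding Q_eq using B by auto
    then show ?thesis using B False unfolding X_def partition_insert_def by auto
  qed
  with Q X show ?thesis by (auto intro!: image_eqI[of _ _ "(Q, X)"])
qed

lemma partition_insert_bij:
  assumes "a \<notin> S"
  shows "bij_betw (\<lambda>(Q, X). partition_insert a Q X)
           (SIGMA Q:{Q. partition_on S Q}. insert None (Some ` Q)) {Q'. partition_on (insert a S) Q'}"
  unfolding bij_betw_def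
proof
  show "inj_on (\<lambda>(Q, X). partition_insert a Q X) (SIGMA Q:{Q. partition_on S Q}. insert None (Some ` Q))"
    by (rule partition_insert_inj[OF assms])
  show "(\<lambda>(Q, X). partition_insert a Q X) ` (SIGMA Q:{Q. partition_on S Q}. insert None (Some ` Q))
      = {Q'. partition_on (insert a S) Q'}"
    using partition_insert_surj[OF assms] partition_insert_partition[OF _ assms] by auto
qed

lemma sum_partitions_insert:
  assumes a: "a \<notin> S" and S: "finite S"
  shows "(\<Sum>Q'\<in>{Q'. partition_on (insert a S) Q'}. f Q') =
     (\<Sum>Q\<in>{Q. partition_on S Q}. f (insert {a} Q) + (\<Sum>A\<in>Q. f (insert (insert a A) (Q - {A}))))"
proof -
  have fin: "finite {Q. partition_on S Q}" by (rule finitely_many_partition_on[OF S])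
  have "(\<Sum>Q'\<in>{Q'. partition_on (insert a S) Q'}. f Q') =
        (\<Sum>(Q, X)\<in>(SIGMA Q:{Q. partition_on S Q}. insert None (Some ` Q)). f (partition_insert a Q X))"
    using sum.reindex_bij_betw[OF partition_insert_bij[OF a], of f] by (simp add: case_prod_unfold)
  also have "\<dots> = (\<Sum>Q\<in>{Q. partition_on S Q}. \<Sum>X\<in>insert None (Some ` Q). f (partition_insert a Q X))"
    using sum.Sigma[OF fin, of "\<lambda>Q. insert None (Some ` Q)" "\<lambda>Q X. f (partition_insert a Q X)"]
      fin finite_elements[OF S] by (simp add: case_prod_unfold)
  also have "\<dots> = (\<Sum>Q\<in>{Q. partition_on S Q}. f (insert {a} Q) + (\<Sum>A\<in>Q. f (insert (insert a A) (Q - {A}))))"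
    using finite_elements[OF S] by (intro sum.cong refl) (simp add: sum.reindex partition_insert_def)
  finally show ?thesis .
qed

subsection \<open>Odd-block sums over set partitions\<close>

definition odd_prefix :: "nat \<Rightarrow> nat set \<Rightarrow> nat" where
  "odd_prefix j A = (if odd (card (A \<inter> {..<j})) then 1 else 0)"

definition odd_blocks :: "nat \<Rightarrow> nat set set \<Rightarrow> nat" where
  "odd_blocks j Q = (\<Sum>A\<in>Q. odd_prefix j A)"

definition moebius :: "'a set set \<Rightarrow> real" where
  "moebius Q = (-1) ^ (card Q - 1) * fact (card Q - 1)"

definition prefix_weight :: "(nat \<Rightarrow> real) \<Rightarrow> nat \<Rightarrow> nat set set \<Rightarrow> real" where
  "prefix_weight y m Q = (\<Prod>j\<in>{1..<m}. y j ^ odd_blocks j Q)"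

definition odd_block_term :: "(nat \<Rightarrow> real) \<Rightarrow> nat \<Rightarrow> nat \<Rightarrow> nat set set \<Rightarrow> real" where
  "odd_block_term y m q Q = (if odd_blocks m Q = q then moebius Q * prefix_weight y m Q else 0)"

definition odd_block_sum :: "(nat \<Rightarrow> real) \<Rightarrow> nat \<Rightarrow> nat \<Rightarrow> real" where
  "odd_block_sum y m q = (\<Sum>Q\<in>{Q. partition_on {..<m} Q}. odd_block_term y m q Q)"

lemma lessThan_partition:
  fixes m :: nat
  assumes "partition_on {..<m} Q"
  shows "finite Q" "\<And>A. A \<in> Q \<Longrightarrow> A \<subseteq> {..<m}" "\<And>A. A \<in> Q \<Longrightarrow> finite A"
    "\<And>A. A \<in> Q \<Longrightarrow> m \<notin> A" "m \<ge> 1 \<Longrightarrow> card Q \<ge> 1"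
proof -
  show fin: "finite Q" by (rule finite_elements[OF finite_lessThan assms])
  show sub: "\<And>A. A \<in> Q \<Longrightarrow> A \<subseteq> {..<m}" using assms unfolding partition_on_def by auto
  then show "\<And>A. A \<in> Q \<Longrightarrow> finite A" using finite_subset by blast
  show "\<And>A. A \<in> Q \<Longrightarrow> m \<notin> A" using sub by blast
  show "m \<ge> 1 \<Longrightarrow> card Q \<ge> 1"
    using assms fin unfolding partition_on_def by (auto simp: Suc_le_eq card_gt_0_iff)
qed

lemma odd_prefix_insert_top: "A \<subseteq> {..<m} \<Longrightarrow> j \<le> m \<Longrightarrow> odd_prefix j (insert m A) = odd_prefix j A"
  unfolding odd_prefix_def by (simp add: Int_insert_left)

lemma odd_prefix_whole: "A \<subseteq> {..<m} \<Longrightarrow> m \<le> j \<Longrightarrow> odd_prefix j A = (if odd (card A) then 1 else 0)"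
proof -
  assume "A \<subseteq> {..<m}" "m \<le> j"
  then have "A \<inter> {..<j} = A" by auto
  then show ?thesis unfolding odd_prefix_def by simp
qed

lemma odd_prefix_Suc_insert:
  assumes "A \<subseteq> {..<m}"
  shows "odd_prefix (Suc m) (insert m A) = (if odd (card A) then 0 else 1)"
proof -
  have "insert m A \<inter> {..<Suc m} = insert m A" "finite A" "m \<notin> A"
    using assms finite_subset by auto
  then show ?thesis unfolding odd_prefix_def by simp
qed

lemma odd_prefix_singleton: "odd_prefix j {m} = (if m < j then 1 else 0)"
  unfolding odd_prefix_def by auto

lemma odd_blocks_whole: "partition_on {..<m} Q \<Longrightarrow> m \<le> j \<Longrightarrow> odd_blocks j Q = odd_blocks m Q"
  unfolding odd_blocks_def
  by (intro sum.cong refl) (simp add: odd_prefix_whole[OF lessThan_partition(2)])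

lemma sum_by_block_parity:
  assumes "partition_on {..<m} Q"
  shows "(\<Sum>A\<in>Q. if odd (card A) then c1 else c2) =
           real (odd_blocks m Q) * c1 + (real (card Q) - real (odd_blocks m Q)) * (c2::real)"
proof -
  have "(\<Sum>A\<in>Q. if odd (card A) then c1 else c2) =
        (\<Sum>A\<in>Q. real (odd_prefix m A) * c1 + (1 - real (odd_prefix m A)) * c2)"
    using odd_prefix_whole[OF lessThan_partition(2)[OF assms]] by (intro sum.cong) auto
  then show ?thesis
    unfolding odd_blocks_def by (simp add: sum.distrib sum_distrib_right sum_subtractf left_diff_distrib)
qed

lemma extend_singleton:
  assumes P: "partition_on {..<m} Q" and m: "m \<ge> 1"
  shows "odd_blocks (Suc m) (insert {m} Q) = odd_blocks m Q + 1"
    "moebius (insert {m} Q) = - real (card Q) * moebius Q"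
    "prefix_weight y (Suc m) (insert {m} Q) = prefix_weight y m Q * y m ^ odd_blocks m Q"
proof -
  note facts = lessThan_partition[OF P]
  have new: "{m} \<notin> Q" using facts(4) by blast
  have blocks: "odd_blocks j (insert {m} Q) = odd_prefix j {m} + odd_blocks j Q" for j
    unfolding odd_blocks_def using facts(1) new by simp
  show "odd_blocks (Suc m) (insert {m} Q) = odd_blocks m Q + 1"
    using blocks[of "Suc m"] odd_blocks_whole[OF P, of "Suc m"] by (simp add: odd_prefix_singleton)
  obtain c where c: "card Q = Suc c" using facts(5)[OF m] by (cases "card Q") auto
  then have "card (insert {m} Q) = Suc (Suc c)" using facts(1) new by simp
  with c show "moebius (insert {m} Q) = - real (card Q) * moebius Q"
    unfolding moebius_def by (simp add: algebra_simps)
  have low: "odd_blocks j (insert {m} Q) = odd_blocks j Q" if "j \<le> m" for j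
    using that by (simp add: blocks odd_prefix_singleton)
  show "prefix_weight y (Suc m) (insert {m} Q) = prefix_weight y m Q * y m ^ odd_blocks m Q"
    unfolding prefix_weight_def using m by (simp add: prod.atLeastLessThan_Suc low)
qed

lemma extend_block:
  assumes P: "partition_on {..<m} Q" and m: "m \<ge> 1" and A: "A \<in> Q"
  shows "odd_blocks (Suc m) (insert (insert m A) (Q - {A})) =
           (if odd (card A) then odd_blocks m Q - 1 else odd_blocks m Q + 1)"
    "moebius (insert (insert m A) (Q - {A})) = moebius Q"
    "prefix_weight y (Suc m) (insert (insert m A) (Q - {A})) = prefix_weight y m Q * y m ^ odd_blocks m Q"
proof -
  note facts = lessThan_partition[OF P]
  have new: "insert m A \<notin> Q - {A}" using facts(4) by blast
  have blocks: "odd_blocks j (insert (insert m A) (Q - {A})) = odd_prefix j (insert m A) + odd_blocks j (Q - {A})"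
    for j unfolding odd_blocks_def using facts(1) new by simp
  have old: "odd_blocks j Q = odd_prefix j A + odd_blocks j (Q - {A})" for j
    unfolding odd_blocks_def using facts(1) A by (simp add: sum.remove)
  have low: "odd_blocks j (insert (insert m A) (Q - {A})) = odd_blocks j Q" if "j \<le> m" for j
    using blocks old odd_prefix_insert_top[OF facts(2)[OF A] that] by simp
  show "odd_blocks (Suc m) (insert (insert m A) (Q - {A})) =
          (if odd (card A) then odd_blocks m Q - 1 else odd_blocks m Q + 1)"
    using blocks[of "Suc m"] old[of "Suc m"] odd_prefix_Suc_insert[OF facts(2)[OF A]]
      odd_prefix_whole[OF facts(2)[OF A], of "Suc m"] odd_blocks_whole[OF P, of "Suc m"]
    by (auto split: if_splits)
  have "card (insert (insert m A) (Q - {A})) = card Q"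
    using facts(1) new A facts(5)[OF m] by (simp add: card_Diff_singleton)
  then show "moebius (insert (insert m A) (Q - {A})) = moebius Q" unfolding moebius_def by simp
  show "prefix_weight y (Suc m) (insert (insert m A) (Q - {A})) = prefix_weight y m Q * y m ^ odd_blocks m Q"
    unfolding prefix_weight_def using m by (simp add: prod.atLeastLessThan_Suc low)
qed

lemma odd_block_term_insert:
  assumes P: "partition_on {..<m} Q" and m: "m \<ge> 1"
  shows "odd_block_term y (Suc m) q (insert {m} Q)
           + (\<Sum>A\<in>Q. odd_block_term y (Suc m) q (insert (insert m A) (Q - {A})))
         = real (q + 1) * y m ^ (q + 1) * odd_block_term y m (q + 1) Q
           - real (q - 1) * y m ^ (q - 1) * odd_block_term y m (q - 1) Q"
proof -
  define k where "k = odd_blocks m Q"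
  define w where "w = moebius Q * prefix_weight y m Q * y m ^ k"
  define X where "X = (if k - 1 = q then w else 0)"
  define Y where "Y = (if k + 1 = q then w else 0)"
  have singleton: "odd_block_term y (Suc m) q (insert {m} Q) = - real (card Q) * Y"
    unfolding odd_block_term_def extend_singleton[OF P m] k_def Y_def w_def by simp
  have "(\<Sum>A\<in>Q. odd_block_term y (Suc m) q (insert (insert m A) (Q - {A}))) =
        (\<Sum>A\<in>Q. if odd (card A) then X else Y)"
    unfolding odd_block_term_def using extend_block[OF P m] unfolding k_def w_def X_def Y_def
    by (intro sum.cong refl) auto
  also have "\<dots> = real k * X + (real (card Q) - real k) * Y"
    unfolding k_def by (rule sum_by_block_parity[OF P])
  finally have "odd_block_term y (Suc m) q (insert {m} Q)
      + (\<Sum>A\<in>Q. odd_block_term y (Suc m) q (insert (insert m A) (Q - {A}))) = real k * X - real k * Y"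
    using singleton by (simp add: algebra_simps)
  also have "\<dots> = real (q + 1) * y m ^ (q + 1) * odd_block_term y m (q + 1) Q
                 - real (q - 1) * y m ^ (q - 1) * odd_block_term y m (q - 1) Q"
    unfolding odd_block_term_def k_def[symmetric] X_def Y_def w_def by (cases k) auto
  finally show ?thesis .
qed

text \<open>The recursion for odd-block sums. Note that \<open>real (q - 1)\<close> vanishes for \<open>q = 0\<close> by
  truncated subtraction, which is exactly right there.\<close>

lemma odd_block_sum_step:
  assumes m: "m \<ge> 1"
  shows "odd_block_sum y (Suc m) q =
           real (q + 1) * y m ^ (q + 1) * odd_block_sum y m (q + 1)
         - real (q - 1) * y m ^ (q - 1) * odd_block_sum y m (q - 1)"
proof -
  have "odd_block_sum y (Suc m) q =
        (\<Sum>Q'\<in>{Q'. partition_on (insert m {..<m}) Q'}. odd_block_term y (Suc m) q Q')"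
    unfolding odd_block_sum_def by (simp add: lessThan_Suc)
  also have "\<dots> = (\<Sum>Q\<in>{Q. partition_on {..<m} Q}. odd_block_term y (Suc m) q (insert {m} Q)
                   + (\<Sum>A\<in>Q. odd_block_term y (Suc m) q (insert (insert m A) (Q - {A}))))"
    by (rule sum_partitions_insert) auto
  also have "\<dots> = (\<Sum>Q\<in>{Q. partition_on {..<m} Q}.
                     real (q + 1) * y m ^ (q + 1) * odd_block_term y m (q + 1) Q
                   - real (q - 1) * y m ^ (q - 1) * odd_block_term y m (q - 1) Q)"
    using odd_block_term_insert[OF _ m] by (intro sum.cong refl) simp
  finally show ?thesis
    unfolding odd_block_sum_def by (simp add: sum_subtractf sum_distrib_left)
qed

lemma partitions_lessThan_1: "{Q. partition_on {..<Suc 0} Q} = {{{0}}}"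
proof -
  have "Q = {{0}}" if "partition_on {0::nat} Q" for Q
  proof -
    have U: "\<Union>Q = {0}" and ne: "{} \<notin> Q" using that unfolding partition_on_def by auto
    have "A = {0}" if A: "A \<in> Q" for A
    proof -
      have "A \<subseteq> {0}" using U A by auto
      moreover have "A \<noteq> {}" using ne A by auto
      ultimately show ?thesis by auto
    qed
    then have "Q \<subseteq> {{0}}" by auto
    moreover have "Q \<noteq> {}" using U by auto
    ultimately show ?thesis by (metis subset_singletonD)
  qed
  moreover have "partition_on {0::nat} {{0}}" by (rule partition_on_space) simp
  moreover have e: "{..<Suc 0} = {0::nat}" by auto
  ultimately show ?thesis unfolding e by blast
qed

lemma odd_block_sum_1: "odd_block_sum y (Suc 0) q = (if q = 1 then 1 else 0)"
proof -
  have "odd_blocks (Suc 0) {{0::nat}} = 1" unfolding odd_blocks_def odd_prefix_def by simp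
  moreover have "moebius {{0::nat}} = 1" unfolding moebius_def by simp
  moreover have "prefix_weight y (Suc 0) {{0::nat}} = 1" unfolding prefix_weight_def by simp
  ultimately show ?thesis unfolding odd_block_sum_def odd_block_term_def partitions_lessThan_1 by simp
qed

lemma odd_block_sum_vanish:
  "m \<ge> 1 \<Longrightarrow> q > m \<or> odd (m + q) \<Longrightarrow> odd_block_sum y m q = 0"
proof (induction m arbitrary: q rule: nat_induct_at_least)
  case base
  then show ?case by (auto simp: odd_block_sum_1)
next
  case (Suc m)
  have "q + 1 > m \<or> odd (m + (q + 1))" using Suc.prems by presburger
  then have "odd_block_sum y m (q + 1) = 0" by (rule Suc.IH)
  moreover have "odd_block_sum y m (q - 1) = 0" if "q \<ge> 1"
  proof -
    have "q - 1 > m \<or> odd (m + (q - 1))" using Suc.prems that by presburger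
    then show ?thesis by (rule Suc.IH)
  qed
  ultimately show ?case
    unfolding odd_block_sum_step[OF Suc.hyps] by (cases "q = 0") auto
qed

subsection \<open>Bounding the odd-block sums by lattice paths\<close>

text \<open>\<open>ballot k q\<close> counts the paths of \<open>k\<close> steps \<open>\<plusminus>1\<close> from height \<open>q\<close> down to height 1
  that never touch 0.\<close>

fun ballot :: "nat \<Rightarrow> nat \<Rightarrow> nat" where
  "ballot 0 q = (if q = 1 then 1 else 0)"
| "ballot (Suc k) q = (if q = 0 then 0 else ballot k (q + 1) + ballot k (q - 1))"

lemma ballot_zero [simp]: "ballot k 0 = 0"
  by (cases k) auto

text \<open>A step at time \<open>m\<close> of a path which returns to 0 at time \<open>2r\<close> has coefficient at most
  \<open>min m (2r - m)\<close> and carries at least the power \<open>gap_mult m\<close> of \<open>y m\<close>.\<close>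

definition gap_mult :: "nat \<Rightarrow> nat" where
  "gap_mult j = (if odd j then 1 else 2)"

definition path_weight :: "(nat \<Rightarrow> real) \<Rightarrow> nat \<Rightarrow> nat \<Rightarrow> real" where
  "path_weight y r m = (\<Prod>j\<in>{1..<m}. real (min j (2 * r - j)) * y j ^ gap_mult j)"

lemma odd_block_sum_step_abs:
  assumes "m \<ge> 1" and "\<And>j. 0 \<le> y j"
  shows "\<bar>odd_block_sum y (Suc m) q\<bar> \<le>
           real (q + 1) * y m ^ (q + 1) * \<bar>odd_block_sum y m (q + 1)\<bar>
         + real (q - 1) * y m ^ (q - 1) * \<bar>odd_block_sum y m (q - 1)\<bar>"
proof -
  let ?a = "real (q + 1) * y m ^ (q + 1) * odd_block_sum y m (q + 1)"
  let ?b = "real (q - 1) * y m ^ (q - 1) * odd_block_sum y m (q - 1)"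
  have "\<bar>?a - ?b\<bar> \<le> \<bar>?a\<bar> + \<bar>?b\<bar>" by (rule abs_triangle_ineq4)
  also have "\<bar>?a\<bar> = real (q + 1) * y m ^ (q + 1) * \<bar>odd_block_sum y m (q + 1)\<bar>"
    by (simp add: abs_mult assms(2))
  also have "\<bar>?b\<bar> = real (q - 1) * y m ^ (q - 1) * \<bar>odd_block_sum y m (q - 1)\<bar>"
    by (simp add: abs_mult assms(2))
  finally show ?thesis unfolding odd_block_sum_step[OF assms(1)] .
qed

text \<open>The coefficient \<open>p * y m ^ p\<close> of a nonzero \<open>odd_block_sum y m p\<close> is bounded by the step
  weight, because \<open>p \<le> m\<close> and \<open>p \<equiv> m (mod 2)\<close>.\<close>

lemma odd_block_sum_weighted:
  assumes m: "m \<ge> 1" and p: "p + m \<le> 2 * r" and y0: "0 \<le> y m" and y1: "y m \<le> 1"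
  shows "real p * y m ^ p * \<bar>odd_block_sum y m p\<bar> \<le>
           real (min m (2 * r - m)) * y m ^ gap_mult m * \<bar>odd_block_sum y m p\<bar>"
proof (cases "p = 0 \<or> odd_block_sum y m p = 0")
  case True
  then show ?thesis using y0 by auto
next
  case False
  then have "\<not> (p > m \<or> odd (m + p))"
    using odd_block_sum_vanish[OF m, of p y] by blast
  then have "p \<le> m" "even (m + p)" "p \<ge> 1" using False by auto
  then have "gap_mult m \<le> p" unfolding gap_mult_def by presburger
  have "real p \<le> real (min m (2 * r - m))" using p \<open>p \<le> m\<close> by simp
  moreover have "y m ^ p \<le> y m ^ gap_mult m"
    using \<open>gap_mult m \<le> p\<close> by (rule power_decreasing[OF _ y0 y1])
  ultimately show ?thesis
    by (intro mult_right_mono mult_mono) (auto simp: y0)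
qed

text \<open>The path bound, for all heights \<open>q \<ge> 1\<close> from which 0 can still be reached by time \<open>2r\<close>.\<close>

lemma odd_block_sum_bound:
  assumes y0: "\<And>j. 0 \<le> y j" and y1: "\<And>j. y j \<le> 1"
  shows "m \<ge> 1 \<Longrightarrow> q \<ge> 1 \<Longrightarrow> q + m \<le> 2 * r \<Longrightarrow>
           \<bar>odd_block_sum y m q\<bar> \<le> real (ballot (m - 1) q) * path_weight y r m"
proof (induction m arbitrary: q rule: nat_induct_at_least)
  case base
  then show ?case by (simp add: odd_block_sum_1 path_weight_def)
next
  case (Suc m)
  define w where "w = real (min m (2 * r - m)) * y m ^ gap_mult m"
  have step: "path_weight y r (Suc m) = path_weight y r m * w"
    unfolding path_weight_def w_def using Suc.hyps by (simp add: prod.atLeastLessThan_Suc)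
  have w0: "0 \<le> w" unfolding w_def using y0 by simp
  have scaled: "real p * y m ^ p * \<bar>odd_block_sum y m p\<bar> \<le> real (ballot (m - 1) p) * path_weight y r m * w"
    if "p + m \<le> 2 * r" for p
  proof (cases "p = 0")
    case False
    have "real p * y m ^ p * \<bar>odd_block_sum y m p\<bar> \<le> w * \<bar>odd_block_sum y m p\<bar>"
      unfolding w_def using odd_block_sum_weighted[where y = y, OF Suc.hyps that y0 y1] by simp
    also have "\<dots> \<le> w * (real (ballot (m - 1) p) * path_weight y r m)"
      using Suc.IH[of p] False that w0 by (intro mult_left_mono) auto
    finally show ?thesis by (simp add: ac_simps)
  qed simp
  have "\<bar>odd_block_sum y (Suc m) q\<bar> \<le>
          real (ballot (m - 1) (q + 1)) * path_weight y r m * w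
        + real (ballot (m - 1) (q - 1)) * path_weight y r m * w"
  proof -
    have "q + 1 + m \<le> 2 * r" "q - 1 + m \<le> 2 * r" using Suc.prems by auto
    then show ?thesis
      using odd_block_sum_step_abs[where y = y and q = q, OF Suc.hyps y0] scaled[of "q + 1"] scaled[of "q - 1"]
      by linarith
  qed
  also have "\<dots> = real (ballot (Suc m - 1) q) * path_weight y r (Suc m)"
  proof -
    have "ballot m q = ballot (m - 1) (q + 1) + ballot (m - 1) (q - 1)"
      using Suc.hyps Suc.prems by (cases m) auto
    then show ?thesis by (simp add: step algebra_simps)
  qed
  finally show ?case .
qed

lemma ballot_high: "q > k + 1 \<Longrightarrow> ballot k q = 0"
  by (induction k arbitrary: q) auto

lemma ballot_top: "ballot k (k + 1) = 1"
  by (induction k) (auto simp: ballot_high)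

lemma binomial_Suc_cases: "Suc n choose d = (if d = 0 then 0 else n choose (d - 1)) + (n choose d)"
  by (cases d) auto

text \<open>The ballot numbers in closed form (reflection principle).\<close>

lemma ballot_closed_form:
  "d \<le> u + 1 \<Longrightarrow>
     ballot (u + d) (u + 1 - d) + (if d = 0 then 0 else (u + d) choose (d - 1)) = (u + d) choose d"
proof (induction "u + d" arbitrary: u d)
  case 0
  then show ?case by simp
next
  case (Suc n)
  consider "d = 0" | "d = u + 1" | "1 \<le> d" "d \<le> u" using Suc.prems by linarith
  then show ?case
  proof cases
    case 1
    then show ?thesis using ballot_top[of u] by simp
  next
    case 2
    have "(u + d) choose u = (u + d) choose (u + d - u)" by (rule binomial_symmetric) simp
    with 2 show ?thesis by simp
  next
    case 3
    then obtain d' u' where d: "d = Suc d'" and u: "u = Suc u'" by (cases d, simp, cases u) auto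
    have n: "n = u + d'" "n = u' + d" using Suc.hyps(2) d u by simp_all
    have IH1: "ballot n (u + 1 - d') + (if d' = 0 then 0 else n choose (d' - 1)) = n choose d'"
      using Suc.hyps(1)[OF n(1)] d 3 by (cases "d' = 0") (simp_all add: n(1))
    have IH2: "ballot n (u' + 1 - d) + (n choose d') = n choose d"
      using Suc.hyps(1)[OF n(2)] d u 3 by (simp add: n(2))
    have "ballot (Suc n) (u + 1 - d) = ballot n (u + 1 - d') + ballot n (u' + 1 - d)"
      using 3 d u by (simp add: Suc_diff_le)
    moreover have "Suc n choose d = (n choose d') + (n choose d)" using d by simp
    moreover note binomial_Suc_cases[of n d']
    ultimately show ?thesis using IH1 IH2 d Suc.hyps(2) by simp
  qed
qed

text \<open>In particular \<open>ballot (2s) 1\<close> is the Catalan number \<open>(2s)! / ((s+1)! s!)\<close>.\<close>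

lemma ballot_catalan: "ballot (2 * s) 1 * fact (s + 1) * fact s = (fact (2 * s) :: nat)"
proof (cases s)
  case 0
  then show ?thesis by simp
next
  case (Suc t)
  have ballot: "ballot (2 * s) 1 + ((2 * s) choose t) = (2 * s) choose s"
    using ballot_closed_form[of s s] Suc by (simp add: mult_2)
  have central: "fact s * fact s * ((2 * s) choose s) = (fact (2 * s) :: nat)"
    using binomial_fact_lemma[of s "2 * s"] by (simp add: mult_2)
  have shifted: "fact t * fact (s + 1) * ((2 * s) choose t) = (fact (2 * s) :: nat)"
    using binomial_fact_lemma[of t "2 * s"] Suc by (simp add: mult_2)
  have fact_s1: "fact (s + 1) = (s + 1) * (fact s :: nat)" and fact_s: "fact s = s * (fact t :: nat)"
    using Suc by (simp_all add: algebra_simps)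
  have "(ballot (2 * s) 1 + ((2 * s) choose t)) * fact (s + 1) * fact s = (s + 1) * (fact (2 * s) :: nat)"
    unfolding ballot fact_s1 central[symmetric] by (simp only: ac_simps)
  moreover have "((2 * s) choose t) * fact (s + 1) * fact s = s * (fact (2 * s) :: nat)"
    unfolding shifted[symmetric] fact_s by (simp only: ac_simps)
  ultimately have "ballot (2 * s) 1 * fact (s + 1) * fact s + s * fact (2 * s) = (s + 1) * (fact (2 * s) :: nat)"
    by (simp only: distrib_right)
  then show ?thesis by simp
qed

lemma prod_descending_fact: "a \<le> b \<Longrightarrow> (\<Prod>j\<in>{a..<b}. b + 1 - j) = fact (b + 1 - a)"
proof (induction "b - a" arbitrary: a)
  case 0
  then show ?case by simp
next
  case (Suc k)
  then have ab: "a < b" by simp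
  have "(\<Prod>j\<in>{a..<b}. b + 1 - j) = (b + 1 - a) * (\<Prod>j\<in>{Suc a..<b}. b + 1 - j)"
    by (rule prod.atLeast_Suc_lessThan[OF ab])
  also have "(\<Prod>j\<in>{Suc a..<b}. b + 1 - j) = fact (b + 1 - Suc a)"
    using Suc.hyps(1)[of "Suc a"] Suc.hyps(2) ab by simp
  also have "(b + 1 - a) * fact (b + 1 - Suc a) = (fact (b + 1 - a) :: nat)"
    using ab by (simp add: Suc_diff_le)
  finally show ?case .
qed

lemma prod_min_tent: "(\<Prod>j\<in>{1..<2 * s + 1}. min j (2 * s + 2 - j)) = fact (s + 1) * fact s"
proof (cases "s = 0")
  case False
  have "(\<Prod>j\<in>{1..<2 * s + 1}. min j (2 * s + 2 - j)) =
        (\<Prod>j\<in>{1..<s + 2}. min j (2 * s + 2 - j)) * (\<Prod>j\<in>{s + 2..<2 * s + 1}. min j (2 * s + 2 - j))"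
    using False by (intro prod.atLeastLessThan_concat[symmetric]) auto
  also have "(\<Prod>j\<in>{1..<s + 2}. min j (2 * s + 2 - j)) = (\<Prod>j\<in>{1..s + 1}. j)"
    by (intro prod.cong) auto
  also have "\<dots> = fact (s + 1)" by (simp add: fact_prod)
  also have "(\<Prod>j\<in>{s + 2..<2 * s + 1}. min j (2 * s + 2 - j)) = (\<Prod>j\<in>{s + 2..<2 * s + 1}. (2 * s + 1) + 1 - j)"
    by (intro prod.cong) auto
  also have "\<dots> = fact s" using prod_descending_fact[of "s + 2" "2 * s + 1"] False by simp
  finally show ?thesis .
qed simp

text \<open>The bound on \<open>H(2r, 0)\<close>; its last step necessarily comes down from height 1.\<close>

lemma odd_block_sum_cumulant_bound:
  assumes r: "r \<ge> 1" and y0: "\<And>j. 0 \<le> y j" and y1: "\<And>j. y j \<le> 1"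
  shows "\<bar>odd_block_sum y (2 * r) 0\<bar> \<le> fact (2 * r - 2) * (\<Prod>j\<in>{1..<2 * r}. y j ^ gap_mult j)"
proof -
  obtain s where s: "r = s + 1" using r by (metis le_add_diff_inverse2)
  define m where "m = 2 * s + 1"
  define P where "P = (\<Prod>j\<in>{1..<m}. y j ^ gap_mult j)"
  have m: "m \<ge> 1" "2 * r = Suc m" "2 * r - 2 = 2 * s" "m - 1 = 2 * s" unfolding m_def s by auto
  have "odd_block_sum y (2 * r) 0 = y m * odd_block_sum y m 1"
    unfolding m(2) odd_block_sum_step[OF m(1)] by simp
  then have "\<bar>odd_block_sum y (2 * r) 0\<bar> = y m * \<bar>odd_block_sum y m 1\<bar>"
    by (simp add: abs_mult y0)
  also have "\<dots> \<le> y m * (real (ballot (2 * s) 1) * path_weight y r m)"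
    using odd_block_sum_bound[OF y0 y1 m(1), of 1 r] m y0 by (intro mult_left_mono) auto
  also have "path_weight y r m = real (fact (s + 1) * fact s) * P"
    unfolding path_weight_def P_def prod.distrib of_nat_prod[symmetric] prod_min_tent[symmetric]
    by (simp add: m_def s)
  also have "y m * (real (ballot (2 * s) 1) * (real (fact (s + 1) * fact s) * P)) =
             real (ballot (2 * s) 1 * fact (s + 1) * fact s) * (P * y m)"
    by (simp only: of_nat_mult ac_simps)
  also have "\<dots> = fact (2 * r - 2) * (\<Prod>j\<in>{1..<2 * r}. y j ^ gap_mult j)"
    unfolding ballot_catalan m(2,3) P_def
    using m(1) by (simp add: prod.atLeastLessThan_Suc gap_mult_def m_def)
  finally show ?thesis .
qed

subsection \<open>Moments of the Ising chain\<close>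

lemma config_spin: "\<sigma> \<in> ising_configs n \<Longrightarrow> k \<in> {1..n} \<Longrightarrow> \<sigma> k \<in> {-1, 1}"
  unfolding ising_configs_def by (auto simp: PiE_iff)

lemma sum_configs_Suc:
  "(\<Sum>\<sigma>\<in>ising_configs (Suc n). g \<sigma>) = (\<Sum>\<sigma>\<in>ising_configs n. \<Sum>t\<in>{-1,1::int}. g (\<sigma>(Suc n := t)))"
proof -
  have e: "{1..Suc n} = insert (Suc n) {1..n}" by auto
  have nin: "Suc n \<notin> {1..n}" by simp
  have "(\<Sum>\<sigma>\<in>ising_configs (Suc n). g \<sigma>) =
      (\<Sum>\<sigma>\<in>(\<lambda>(y, h). h(Suc n := y)) ` ({-1,1::int} \<times> ising_configs n). g \<sigma>)"
    unfolding ising_configs_def e PiE_insert_eq by simp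
  also have "\<dots> = (\<Sum>p\<in>{-1,1::int} \<times> ising_configs n. g ((\<lambda>(y, h). h(Suc n := y)) p))"
    using sum.reindex[OF inj_combinator[OF nin, of "\<lambda>_. {-1,1::int}"]] unfolding ising_configs_def
    by simp
  also have "\<dots> = (\<Sum>t\<in>{-1,1::int}. \<Sum>\<sigma>\<in>ising_configs n. g (\<sigma>(Suc n := t)))"
    by (simp add: sum.cartesian_product case_prod_unfold)
  also have "\<dots> = (\<Sum>\<sigma>\<in>ising_configs n. \<Sum>t\<in>{-1,1::int}. g (\<sigma>(Suc n := t)))"
    by (rule sum.swap)
  finally show ?thesis .
qed

lemma sum_configs_Suc_fixed:
  assumes "s \<in> {-1, 1::int}"
  shows "(\<Sum>\<sigma>\<in>ising_configs (Suc n). if \<sigma> (Suc n) = s then g \<sigma> else 0) =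
         (\<Sum>\<sigma>\<in>ising_configs n. g (\<sigma>(Suc n := s)))"
  unfolding sum_configs_Suc using assms by (intro sum.cong refl) auto

lemma sum_by_last_spin:
  assumes "n \<ge> 1"
  shows "(\<Sum>\<sigma>\<in>ising_configs n. g \<sigma>) =
         (\<Sum>u\<in>{-1, 1::int}. \<Sum>\<sigma>\<in>ising_configs n. if \<sigma> n = u then g \<sigma> else (0::real))"
proof -
  have "g \<sigma> = (\<Sum>u\<in>{-1, 1::int}. if \<sigma> n = u then g \<sigma> else 0)" if "\<sigma> \<in> ising_configs n" for \<sigma>
    using config_spin[OF that, of n] assms by auto
  then show ?thesis by (subst sum.swap) (rule sum.cong, simp_all)
qed

lemma ising_weight_Suc:
  assumes "n \<ge> 1"
  shows "ising_weight \<beta> (Suc n) (\<sigma>(Suc n := t)) = ising_weight \<beta> n \<sigma> * exp (\<beta> * real_of_int (\<sigma> n * t))"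
proof -
  have "(\<Sum>i = 1..<Suc n. real_of_int ((\<sigma>(Suc n := t)) i * (\<sigma>(Suc n := t)) (i + 1)))
      = (\<Sum>i = 1..<n. real_of_int ((\<sigma>(Suc n := t)) i * (\<sigma>(Suc n := t)) (i + 1)))
        + real_of_int (\<sigma> n * t)"
    using assms by (simp add: sum.atLeastLessThan_Suc)
  also have "(\<Sum>i = 1..<n. real_of_int ((\<sigma>(Suc n := t)) i * (\<sigma>(Suc n := t)) (i + 1)))
      = (\<Sum>i = 1..<n. real_of_int (\<sigma> i * \<sigma> (i + 1)))"
    by (intro sum.cong) auto
  finally show ?thesis unfolding ising_weight_def by (simp add: distrib_left exp_add)
qed

definition prefix_count :: "(nat \<Rightarrow> nat) \<Rightarrow> nat \<Rightarrow> nat" where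
  "prefix_count c k = (\<Sum>k'\<in>{1..k}. c k')"

definition spin_monomial :: "nat \<Rightarrow> (nat \<Rightarrow> nat) \<Rightarrow> (nat \<Rightarrow> int) \<Rightarrow> real" where
  "spin_monomial n c \<sigma> = (\<Prod>k\<in>{1..n}. real_of_int (\<sigma> k) ^ c k)"

definition wall_weight :: "real \<Rightarrow> (nat \<Rightarrow> nat) \<Rightarrow> nat \<Rightarrow> real" where
  "wall_weight \<beta> c n = (\<Prod>k\<in>{1..<n}. tanh \<beta> ^ (if odd (prefix_count c k) then 1 else 0))"

lemma spin_monomial_Suc:
  "spin_monomial (Suc n) c (\<sigma>(Suc n := t)) = spin_monomial n c \<sigma> * real_of_int t ^ c (Suc n)"
proof -
  have "(\<Prod>k\<in>{1..n}. real_of_int ((\<sigma>(Suc n := t)) k) ^ c k) = spin_monomial n c \<sigma>"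
    unfolding spin_monomial_def by (intro prod.cong) auto
  then show ?thesis unfolding spin_monomial_def by (simp add: prod.nat_ivl_Suc')
qed

text \<open>Summing the factor of a new bond over the previous spin \<open>u = \<plusminus>1\<close>: the even part
  gives \<open>2 cosh \<beta>\<close>, the odd part \<open>2 sinh \<beta>\<close>.\<close>

lemma exp_spin_pair:
  assumes s: "s \<in> {-1, 1::int}"
  shows "exp (\<beta> * real_of_int s) + (-1) ^ C * exp (\<beta> * real_of_int (- s))
     = real_of_int s ^ C * (2 * cosh \<beta>) * tanh \<beta> ^ (if odd C then 1 else 0)"
proof -
  have "cosh \<beta> \<noteq> 0" using cosh_real_pos[of \<beta>] by simp
  then have sinh: "2 * cosh \<beta> * tanh \<beta> = exp \<beta> - exp (- \<beta>)"
    unfolding tanh_def sinh_def by (simp add: field_simps)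
  have cosh: "2 * cosh \<beta> = exp \<beta> + exp (- \<beta>)" unfolding cosh_def by simp
  show ?thesis
  proof (cases "even C")
    case True
    then show ?thesis using s cosh by auto
  next
    case False
    then show ?thesis using s sinh by (auto simp: algebra_simps)
  qed
qed

lemma sum_last_bond:
  assumes n: "n \<ge> 1"
  shows "(\<Sum>\<sigma>\<in>ising_configs n. f \<sigma> * exp (\<beta> * real_of_int (\<sigma> n * s))) =
         (\<Sum>u\<in>{-1, 1::int}. exp (\<beta> * real_of_int (u * s)) *
            (\<Sum>\<sigma>\<in>ising_configs n. if \<sigma> n = u then f \<sigma> else 0))"
proof -
  have "(\<Sum>\<sigma>\<in>ising_configs n. f \<sigma> * exp (\<beta> * real_of_int (\<sigma> n * s))) =
      (\<Sum>u\<in>{-1, 1::int}. \<Sum>\<sigma>\<in>ising_configs n.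
          if \<sigma> n = u then f \<sigma> * exp (\<beta> * real_of_int (\<sigma> n * s)) else 0)"
    by (rule sum_by_last_spin[OF n])
  also have "\<dots> = (\<Sum>u\<in>{-1, 1::int}. exp (\<beta> * real_of_int (u * s)) *
                      (\<Sum>\<sigma>\<in>ising_configs n. if \<sigma> n = u then f \<sigma> else 0))"
    unfolding sum_distrib_left by (intro sum.cong refl) auto
  finally show ?thesis .
qed

lemma sum_configs_last_spin:
  assumes "n \<ge> 1" and "s \<in> {-1, 1::int}"
  shows "(\<Sum>\<sigma>\<in>ising_configs n. if \<sigma> n = s then spin_monomial n c \<sigma> * ising_weight \<beta> n \<sigma> else 0)
         = real_of_int s ^ prefix_count c n * (2 * cosh \<beta>) ^ (n - 1) * wall_weight \<beta> c n"
  using assms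
proof (induction n arbitrary: s rule: nat_induct_at_least)
  case base
  have configs0: "ising_configs 0 = {\<lambda>_. undefined}" unfolding ising_configs_def by simp
  have weight1: "ising_weight \<beta> (Suc 0) \<sigma> = 1" for \<sigma> unfolding ising_weight_def by simp
  show ?case
    unfolding One_nat_def sum_configs_Suc configs0 using base
    by (auto simp: spin_monomial_def prefix_count_def wall_weight_def weight1)
next
  case (Suc n)
  define f where "f \<sigma> = spin_monomial n c \<sigma> * ising_weight \<beta> n \<sigma>" for \<sigma>
  define K where "K = (2 * cosh \<beta>) ^ (n - 1) * wall_weight \<beta> c n"
  have walls: "wall_weight \<beta> c (Suc n) = wall_weight \<beta> c n * tanh \<beta> ^ (if odd (prefix_count c n) then 1 else 0)"
    unfolding wall_weight_def using Suc.hyps by (simp add: prod.atLeastLessThan_Suc)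
  have count: "prefix_count c (Suc n) = prefix_count c n + c (Suc n)"
    unfolding prefix_count_def by simp
  have cosh_pow: "(2 * cosh \<beta>) ^ (Suc n - 1) = 2 * cosh \<beta> * (2 * cosh \<beta>) ^ (n - 1)"
    using Suc.hyps by (cases n) auto
  have "(\<Sum>\<sigma>\<in>ising_configs (Suc n). if \<sigma> (Suc n) = s
           then spin_monomial (Suc n) c \<sigma> * ising_weight \<beta> (Suc n) \<sigma> else 0)
        = real_of_int s ^ c (Suc n) * (\<Sum>\<sigma>\<in>ising_configs n. f \<sigma> * exp (\<beta> * real_of_int (\<sigma> n * s)))"
    unfolding sum_configs_Suc_fixed[OF Suc.prems] spin_monomial_Suc ising_weight_Suc[OF Suc.hyps] f_def
    by (simp add: sum_distrib_left algebra_simps)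
  also have "\<dots> = real_of_int s ^ c (Suc n) *
      ((exp (\<beta> * real_of_int s) + (-1) ^ prefix_count c n * exp (\<beta> * real_of_int (- s))) * K)"
    unfolding sum_last_bond[OF Suc.hyps] using Suc.IH[of 1] Suc.IH[of "-1"] unfolding f_def K_def by (simp add: algebra_simps)
  also have "\<dots> = real_of_int s ^ prefix_count c (Suc n) * (2 * cosh \<beta>) ^ (Suc n - 1) * wall_weight \<beta> c (Suc n)"
    unfolding exp_spin_pair[OF Suc.prems] K_def walls count cosh_pow by (simp add: power_add algebra_simps)
  finally show ?case .
qed

lemma sum_spin_monomial:
  assumes n: "n \<ge> 1"
  shows "(\<Sum>\<sigma>\<in>ising_configs n. spin_monomial n c \<sigma> * ising_weight \<beta> n \<sigma>)
         = (1 + (-1) ^ prefix_count c n) * (2 * cosh \<beta>) ^ (n - 1) * wall_weight \<beta> c n"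
proof -
  have "(\<Sum>\<sigma>\<in>ising_configs n. spin_monomial n c \<sigma> * ising_weight \<beta> n \<sigma>) =
        (\<Sum>u\<in>{-1, 1::int}. \<Sum>\<sigma>\<in>ising_configs n.
            if \<sigma> n = u then spin_monomial n c \<sigma> * ising_weight \<beta> n \<sigma> else 0)"
    by (rule sum_by_last_spin[OF n])
  also have "\<dots> = (\<Sum>u\<in>{-1, 1::int}. real_of_int u ^ prefix_count c n * (2 * cosh \<beta>) ^ (n - 1) * wall_weight \<beta> c n)"
    using sum_configs_last_spin[OF n] by (intro sum.cong refl) auto
  also have "\<dots> = (1 + (-1) ^ prefix_count c n) * (2 * cosh \<beta>) ^ (n - 1) * wall_weight \<beta> c n"
    by (simp add: algebra_simps)
  finally show ?thesis .
qed

text \<open>The partition function is the sum for the constant monomial 1.\<close>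

lemma ising_partition_fn_eq:
  assumes n: "n \<ge> 1"
  shows "ising_partition_fn \<beta> n = 2 * (2 * cosh \<beta>) ^ (n - 1)"
proof -
  have "ising_partition_fn \<beta> n = (\<Sum>\<sigma>\<in>ising_configs n. spin_monomial n (\<lambda>_. 0) \<sigma> * ising_weight \<beta> n \<sigma>)"
    unfolding ising_partition_fn_def spin_monomial_def by simp
  then show ?thesis
    unfolding sum_spin_monomial[OF n] by (simp add: prefix_count_def wall_weight_def)
qed

lemma ising_expect_monomial:
  assumes n: "n \<ge> 1" and f: "\<And>\<sigma>. \<sigma> \<in> ising_configs n \<Longrightarrow> f \<sigma> = spin_monomial n c \<sigma>"
  shows "ising_expect \<beta> n f = (if even (prefix_count c n) then wall_weight \<beta> c n else 0)"
proof -
  have "(\<Sum>\<sigma>\<in>ising_configs n. f \<sigma> * ising_weight \<beta> n \<sigma>) =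
        (1 + (-1) ^ prefix_count c n) * (2 * cosh \<beta>) ^ (n - 1) * wall_weight \<beta> c n"
    using f sum_spin_monomial[OF n, of c \<beta>] by (simp cong: sum.cong)
  moreover have "(2 * cosh \<beta>) ^ (n - 1) \<noteq> 0" using cosh_real_pos[of \<beta>] by simp
  ultimately show ?thesis unfolding ising_expect_def ising_partition_fn_eq[OF n] by auto
qed

text \<open>For sorted positions \<open>p\<close> and a set \<open>A\<close> of indices, the product of the spins at the
  positions \<open>p ! j\<close>, \<open>j \<in> A\<close>, is the monomial with exponents \<open>spin_multiplicity p A\<close>;
  its bond \<open>k\<close> carries a factor \<open>tanh \<beta>\<close> iff \<open>wall_indicator p A k = 1\<close>.\<close>

definition spin_multiplicity :: "nat list \<Rightarrow> nat set \<Rightarrow> nat \<Rightarrow> nat" where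
  "spin_multiplicity p A k = card {j\<in>A. p!j = k}"

definition wall_indicator :: "nat list \<Rightarrow> nat set \<Rightarrow> nat \<Rightarrow> nat" where
  "wall_indicator p A k = (if odd (card {j\<in>A. p!j \<le> k}) then 1 else 0)"

lemma prod_block_monomial:
  assumes A: "A \<subseteq> {..<length p}" and rng: "\<forall>k\<in>set p. 1 \<le> k \<and> k \<le> n"
  shows "(\<Prod>j\<in>A. real_of_int (\<sigma> (p!j))) = spin_monomial n (spin_multiplicity p A) \<sigma>"
proof -
  have fA: "finite A" using A finite_subset by blast
  have img: "(\<lambda>j. p!j) ` A \<subseteq> {1..n}" using A rng by (auto simp: subset_iff)
  have "(\<Prod>j\<in>A. real_of_int (\<sigma> (p!j))) = (\<Prod>k\<in>{1..n}. \<Prod>j\<in>{j\<in>A. p!j = k}. real_of_int (\<sigma> (p!j)))"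
    by (rule prod.group[OF fA _ img, symmetric]) simp
  also have "\<dots> = (\<Prod>k\<in>{1..n}. real_of_int (\<sigma> k) ^ spin_multiplicity p A k)"
  proof (intro prod.cong refl)
    fix k
    have "(\<Prod>j\<in>{j\<in>A. p!j = k}. real_of_int (\<sigma> (p!j))) = (\<Prod>j\<in>{j\<in>A. p!j = k}. real_of_int (\<sigma> k))"
      by (intro prod.cong) auto
    then show "(\<Prod>j\<in>{j\<in>A. p!j = k}. real_of_int (\<sigma> (p!j))) = real_of_int (\<sigma> k) ^ spin_multiplicity p A k"
      unfolding spin_multiplicity_def by simp
  qed
  finally show ?thesis unfolding spin_monomial_def .
qed

lemma prefix_count_multiplicity:
  assumes A: "A \<subseteq> {..<length p}" and rng: "\<forall>k\<in>set p. 1 \<le> k \<and> k \<le> n"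
  shows "prefix_count (spin_multiplicity p A) k = card {j\<in>A. p!j \<le> k}"
proof -
  have fA: "finite A" using A finite_subset by blast
  define S where "S = {j\<in>A. p!j \<le> k}"
  have fS: "finite S" unfolding S_def using fA by simp
  have img: "(\<lambda>j. p!j) ` S \<subseteq> {1..k}" using A rng unfolding S_def by (auto simp: subset_iff)
  have "card S = (\<Sum>j\<in>S. 1)" by simp
  also have "\<dots> = (\<Sum>k'\<in>{1..k}. \<Sum>j\<in>{j\<in>S. p!j = k'}. 1)"
    by (rule sum.group[OF fS _ img, symmetric]) simp
  also have "\<dots> = (\<Sum>k'\<in>{1..k}. spin_multiplicity p A k')"
  proof (intro sum.cong refl)
    fix k' assume "k' \<in> {1..k}"
    then have "{j\<in>S. p!j = k'} = {j\<in>A. p!j = k'}" unfolding S_def by auto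
    then show "(\<Sum>j\<in>{j\<in>S. p!j = k'}. 1) = spin_multiplicity p A k'" unfolding spin_multiplicity_def by simp
  qed
  finally show ?thesis unfolding prefix_count_def S_def by simp
qed

text \<open>Between consecutive positions \<open>p ! (j - 1) \<le> k < p ! j\<close> the chosen indices up to site \<open>k\<close>
  are those below \<open>j\<close>, so the indicator of bond \<open>k\<close> is \<open>odd_prefix j A\<close>.\<close>

lemma positions_below:
  assumes A: "A \<subseteq> {..<length p}" and s: "sorted p" and j: "j \<le> length p"
    and lo: "j = 0 \<or> p!(j-1) \<le> k" and hi: "j = length p \<or> k < p!j"
  shows "{j'\<in>A. p!j' \<le> k} = A \<inter> {..<j}"
proof (intro set_eqI iffI)
  fix x assume x: "x \<in> {j'\<in>A. p!j' \<le> k}"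
  show "x \<in> A \<inter> {..<j}"
  proof (rule ccontr)
    assume "x \<notin> A \<inter> {..<j}"
    then have "j \<le> x" using x by auto
    moreover have "x < length p" using x A by auto
    ultimately have "j < length p" "p!j \<le> p!x" using s by (auto simp: sorted_iff_nth_mono)
    then show False using hi x by auto
  qed
next
  fix x assume x: "x \<in> A \<inter> {..<j}"
  then have "x \<le> j - 1" "j - 1 < length p" "j \<noteq> 0" using j by auto
  then have "p!x \<le> p!(j-1)" using s by (auto simp: sorted_iff_nth_mono)
  then show "x \<in> {j'\<in>A. p!j' \<le> k}" using x lo by auto
qed

text \<open>Counting the bonds that carry \<open>tanh \<beta>\<close>, gap by gap; beyond the last position no bond
  does when \<open>A\<close> is even.\<close>

lemma wall_count_prefix:
  assumes A: "A \<subseteq> {..<length p}" and s: "sorted p" and rng: "\<forall>k\<in>set p. 1 \<le> k \<and> k \<le> n"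
  shows "m < length p \<Longrightarrow> (\<Sum>k\<in>{1..<p!m}. wall_indicator p A k)
      = (\<Sum>j\<in>{1..<Suc m}. (p!j - p!(j-1)) * odd_prefix j A)"
proof (induction m)
  case 0
  have "(\<Sum>k\<in>{1..<p!0}. wall_indicator p A k) = (\<Sum>k\<in>{1..<p!0}. (0::nat))"
  proof (intro sum.cong refl)
    fix k assume "k \<in> {1..<p!0}"
    then have e: "{j\<in>A. p!j \<le> k} = A \<inter> {..<0}" by (intro positions_below[OF A s]) auto
    show "wall_indicator p A k = (0::nat)" unfolding wall_indicator_def e by simp
  qed
  then show ?case by simp
next
  case (Suc m)
  have m: "m < length p" using Suc.prems by simp
  have "p!m \<in> set p" using m by simp
  then have pm1: "1 \<le> p!m" using rng by auto
  have pm2: "p!m \<le> p!(Suc m)" using s Suc.prems by (auto simp: sorted_iff_nth_mono)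
  have "(\<Sum>k\<in>{1..<p!(Suc m)}. wall_indicator p A k)
     = (\<Sum>k\<in>{1..<p!m}. wall_indicator p A k)
       + (\<Sum>k\<in>{p!m..<p!(Suc m)}. wall_indicator p A k)"
    by (rule sum.atLeastLessThan_concat[OF pm1 pm2, symmetric])
  also have "(\<Sum>k\<in>{p!m..<p!(Suc m)}. wall_indicator p A k)
     = (\<Sum>k\<in>{p!m..<p!(Suc m)}. odd_prefix (Suc m) A)"
  proof (intro sum.cong refl)
    fix k assume k: "k \<in> {p!m..<p!(Suc m)}"
    have "{j\<in>A. p!j \<le> k} = A \<inter> {..<Suc m}" by (rule positions_below[OF A s]) (use Suc.prems k in auto)
    then show "wall_indicator p A k = odd_prefix (Suc m) A" unfolding wall_indicator_def odd_prefix_def by simp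
  qed
  also have "\<dots> = (p!(Suc m) - p!(Suc m - 1)) * odd_prefix (Suc m) A" by simp
  finally show ?case using Suc.IH[OF m] by (simp add: sum.atLeastLessThan_Suc)
qed

lemma wall_count_total:
  assumes A: "A \<subseteq> {..<length p}" and s: "sorted p" and rng: "\<forall>k\<in>set p. 1 \<le> k \<and> k \<le> n"
    and L: "length p \<ge> 1" and ev: "even (card A)"
  shows "(\<Sum>k\<in>{1..<n}. wall_indicator p A k)
      = (\<Sum>j\<in>{1..<length p}. (p!j - p!(j-1)) * odd_prefix j A)"
proof -
  define l where "l = length p - 1"
  have l: "l < length p" "Suc l = length p" using L unfolding l_def by auto
  have "p!l \<in> set p" using l(1) by simp
  then have pl1: "1 \<le> p!l" and pl2: "p!l \<le> n" using rng by auto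
  have "(\<Sum>k\<in>{1..<n}. wall_indicator p A k)
     = (\<Sum>k\<in>{1..<p!l}. wall_indicator p A k)
       + (\<Sum>k\<in>{p!l..<n}. wall_indicator p A k)"
    by (rule sum.atLeastLessThan_concat[OF pl1 pl2, symmetric])
  also have "(\<Sum>k\<in>{p!l..<n}. wall_indicator p A k) = (\<Sum>k\<in>{p!l..<n}. (0::nat))"
  proof (intro sum.cong refl)
    fix k assume k: "k \<in> {p!l..<n}"
    have l3: "length p - 1 = l" using l by simp
    have "{j\<in>A. p!j \<le> k} = A \<inter> {..<length p}" by (rule positions_below[OF A s]) (use l3 k in auto)
    also have "\<dots> = A" using A by auto
    finally show "wall_indicator p A k = (0::nat)" unfolding wall_indicator_def using ev by simp
  qed
  also have "(\<Sum>k\<in>{1..<p!l}. wall_indicator p A k)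
      = (\<Sum>j\<in>{1..<Suc l}. (p!j - p!(j-1)) * odd_prefix j A)" by (rule wall_count_prefix[OF A s rng l(1)])
  finally show ?thesis using l by simp
qed

lemma ising_block_moment:
  assumes A: "A \<subseteq> {..<length p}" and s: "sorted p" and rng: "\<forall>k\<in>set p. 1 \<le> k \<and> k \<le> n"
    and L: "length p \<ge> 1" and n1: "n \<ge> 1"
  shows "ising_expect \<beta> n (\<lambda>\<sigma>. \<Prod>j\<in>A. real_of_int (\<sigma> (p!j)))
    = (if even (card A) then (\<Prod>j\<in>{1..<length p}. (tanh \<beta> ^ (p!j - p!(j-1))) ^ odd_prefix j A) else 0)"
proof -
  have E: "ising_expect \<beta> n (\<lambda>\<sigma>. \<Prod>j\<in>A. real_of_int (\<sigma> (p!j)))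
      = (if even (prefix_count (spin_multiplicity p A) n) then wall_weight \<beta> (spin_multiplicity p A) n else 0)"
    by (rule ising_expect_monomial[OF n1]) (rule prod_block_monomial[OF A rng])
  have C: "prefix_count (spin_multiplicity p A) n = card A"
  proof -
    have "p!x \<le> n" if "x \<in> A" for x
    proof -
      have "p!x \<in> set p" using that A by auto
      then show ?thesis using rng by auto
    qed
    then have "{j\<in>A. p!j \<le> n} = A" by auto
    then show ?thesis using prefix_count_multiplicity[OF A rng] by simp
  qed
  show ?thesis
  proof (cases "even (card A)")
    case False then show ?thesis using E C by simp
  next
    case True
    have "wall_weight \<beta> (spin_multiplicity p A) n = (\<Prod>k\<in>{1..<n}. tanh \<beta> ^ wall_indicator p A k)"
      unfolding wall_weight_def prefix_count_multiplicity[OF A rng] wall_indicator_def ..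
    also have "\<dots> = tanh \<beta> ^ (\<Sum>k\<in>{1..<n}. wall_indicator p A k)"
      by (simp add: power_sum)
    also have "\<dots> = tanh \<beta> ^ (\<Sum>j\<in>{1..<length p}. (p!j - p!(j-1)) * odd_prefix j A)"
      unfolding wall_count_total[OF A s rng L True] ..
    also have "\<dots> = (\<Prod>j\<in>{1..<length p}. (tanh \<beta> ^ (p!j - p!(j-1))) ^ odd_prefix j A)"
      by (simp add: power_sum power_mult)
    finally show ?thesis using E C True by simp
  qed
qed

subsection \<open>The cumulant bound\<close>

lemma gap_exponent:
  assumes s: "sorted p"
  shows "1 \<le> r \<Longrightarrow> 2 * r \<le> length p \<Longrightarrow>
    (\<Sum>j\<in>{1..<2 * r}. (p!j - p!(j - 1)) * gap_mult j)
      = p!(2 * r - 1) + (\<Sum>k = 1..<r. p!(2 * k) - p!(2 * k - 1)) - p!0"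
proof (induction r rule: nat_induct_at_least)
  case base
  have "{1..<2 * 1 :: nat} = {1}" by auto
  then show ?case by (simp add: gap_mult_def)
next
  case (Suc r)
  have mono: "p!a \<le> p!b" if "a \<le> b" "b < length p" for a b
    using s that by (simp add: sorted_iff_nth_mono)
  have order: "p!0 \<le> p!(2 * r - 1)" "p!(2 * r - 1) \<le> p!(2 * r)" "p!(2 * r) \<le> p!(2 * r + 1)"
    using mono[of 0 "2 * r - 1"] mono[of "2 * r - 1" "2 * r"] mono[of "2 * r" "2 * r + 1"] Suc.prems by auto
  define F where "F j = (p!j - p!(j - 1)) * gap_mult j" for j
  define G where "G k = p!(2 * k) - p!(2 * k - 1)" for k
  have IH: "(\<Sum>j\<in>{1..<2 * r}. F j) = p!(2 * r - 1) + (\<Sum>k = 1..<r. G k) - p!0"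
    using Suc.IH Suc.prems unfolding F_def G_def by simp
  have split_F: "(\<Sum>j\<in>{1..<2 * Suc r}. F j) = (\<Sum>j\<in>{1..<2 * r}. F j) + F (2 * r) + F (Suc (2 * r))"
    using sum.atLeastLessThan_Suc[of 1 "Suc (2 * r)" F] sum.atLeastLessThan_Suc[of 1 "2 * r" F] Suc.hyps
    by simp
  have split_G: "(\<Sum>k = 1..<Suc r. G k) = (\<Sum>k = 1..<r. G k) + G r"
    using sum.atLeastLessThan_Suc[of 1 r G] Suc.hyps by simp
  have last: "F (2 * r) = (p!(2 * r) - p!(2 * r - 1)) * 2" "F (Suc (2 * r)) = p!(2 * r + 1) - p!(2 * r)"
    "G r = p!(2 * r) - p!(2 * r - 1)" "2 * Suc r - 1 = 2 * r + 1"
    unfolding F_def G_def gap_mult_def by simp_all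
  have "(\<Sum>j\<in>{1..<2 * Suc r}. F j) = p!(2 * Suc r - 1) + (\<Sum>k = 1..<Suc r. G k) - p!0"
    unfolding split_F split_G IH last using order by linarith
  then show ?case unfolding F_def G_def .
qed

lemma prod_blocks_vanish:
  assumes "finite Q"
  shows "(\<Prod>A\<in>Q. if odd_prefix m A = 0 then P A else (0::real)) =
         (if odd_blocks m Q = 0 then (\<Prod>A\<in>Q. P A) else 0)"
proof (cases "odd_blocks m Q = 0")
  case True
  then have "\<forall>A\<in>Q. odd_prefix m A = 0" using assms unfolding odd_blocks_def by simp
  then show ?thesis using True by simp
next
  case False
  then obtain A where "A \<in> Q" "odd_prefix m A \<noteq> 0" using assms unfolding odd_blocks_def by auto
  then show ?thesis using False assms by (auto intro!: prod_zero bexI[of _ A])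
qed

lemma ising_partition_moments:
  fixes \<beta> :: real
  assumes s: "sorted i" and rng: "\<forall>k\<in>set i. 1 \<le> k \<and> k \<le> n" and L: "length i \<ge> 1" and n: "n \<ge> 1"
    and P: "partition_on {..<length i} Q"
  defines "y \<equiv> \<lambda>j. tanh \<beta> ^ (i!j - i!(j-1))"
  shows "(\<Prod>A\<in>Q. ising_expect \<beta> n (\<lambda>\<sigma>. \<Prod>j\<in>A. real_of_int (\<sigma> (i!j))))
         = (if odd_blocks (length i) Q = 0 then prefix_weight y (length i) Q else 0)"
proof -
  note facts = lessThan_partition[OF P]
  have block: "ising_expect \<beta> n (\<lambda>\<sigma>. \<Prod>j\<in>A. real_of_int (\<sigma> (i!j)))
      = (if odd_prefix (length i) A = 0 then (\<Prod>j\<in>{1..<length i}. y j ^ odd_prefix j A) else 0)"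
    if "A \<in> Q" for A
    using ising_block_moment[OF facts(2)[OF that] s rng L n, of \<beta>]
      odd_prefix_whole[OF facts(2)[OF that] order.refl]
    unfolding y_def by simp
  have "(\<Prod>A\<in>Q. ising_expect \<beta> n (\<lambda>\<sigma>. \<Prod>j\<in>A. real_of_int (\<sigma> (i!j))))
      = (\<Prod>A\<in>Q. if odd_prefix (length i) A = 0 then (\<Prod>j\<in>{1..<length i}. y j ^ odd_prefix j A) else 0)"
    by (rule prod.cong[OF refl block])
  also have "\<dots> = (if odd_blocks (length i) Q = 0 then (\<Prod>A\<in>Q. \<Prod>j\<in>{1..<length i}. y j ^ odd_prefix j A) else 0)"
    by (rule prod_blocks_vanish[OF facts(1)])
  also have "(\<Prod>A\<in>Q. \<Prod>j\<in>{1..<length i}. y j ^ odd_prefix j A) = prefix_weight y (length i) Q"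
    unfolding prefix_weight_def odd_blocks_def by (subst prod.swap) (simp add: power_sum)
  finally show ?thesis .
qed

lemma cumulant_eq_odd_block_sum:
  assumes s: "sorted i" and rng: "\<forall>k\<in>set i. 1 \<le> k \<and> k \<le> n" and L: "length i \<ge> 1" and n: "n \<ge> 1"
  shows "joint_cumulant (ising_expect \<beta> n) (map (\<lambda>k \<sigma>. real_of_int (\<sigma> k)) i)
       = odd_block_sum (\<lambda>j. tanh \<beta> ^ (i!j - i!(j-1))) (length i) 0"
proof -
  have spins: "(\<lambda>\<sigma>. \<Prod>j\<in>A. (map (\<lambda>k \<sigma>. real_of_int (\<sigma> k)) i ! j) \<sigma>) =
               (\<lambda>\<sigma>. \<Prod>j\<in>A. real_of_int (\<sigma> (i!j)))" if "A \<subseteq> {..<length i}" for A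
    using that by (intro ext prod.cong) auto
  have "{0..<length i} = {..<length i}" by auto
  then show ?thesis
    unfolding joint_cumulant_def odd_block_sum_def odd_block_term_def length_map
    using ising_partition_moments[OF s rng L n] spins lessThan_partition(2)
    by (intro sum.cong refl) (auto simp: moebius_def)
qed

theorem mainTheorem15:
  fixes \<beta> :: real and n r :: nat and i :: "nat list"
  assumes "\<beta> > 0" and "r \<ge> 1" and "length i = 2 * r" and "sorted i"
    and "\<forall>k\<in>set i. 1 \<le> k \<and> k \<le> n"
  shows "\<bar>joint_cumulant (ising_expect \<beta> n) (map (\<lambda>k \<sigma>. real_of_int (\<sigma> k)) i)\<bar>
         \<le> fact (2 * r - 2) *
           tanh \<beta> ^ (i ! (2 * r - 1) + (\<Sum>k = 1..<r. i ! (2 * k) - i ! (2 * k - 1)) - i ! 0)"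
proof -
  note \<beta> = assms(1) and r = assms(2) and len = assms(3) and sorted = assms(4) and range = assms(5)
  have L: "length i \<ge> 1" using len r by simp
  then have "i!0 \<in> set i" by (intro nth_mem) linarith
  then have n: "n \<ge> 1" using range by auto
  define y where "y j = tanh \<beta> ^ (i!j - i!(j - 1))" for j
  have y0: "0 \<le> y j" and y1: "y j \<le> 1" for j
    unfolding y_def using tanh_real_pos_iff[of \<beta>] tanh_real_lt_1[of \<beta>] \<beta>
    by (simp_all add: power_le_one)
  have "\<bar>joint_cumulant (ising_expect \<beta> n) (map (\<lambda>k \<sigma>. real_of_int (\<sigma> k)) i)\<bar>
        = \<bar>odd_block_sum y (2 * r) 0\<bar>"
    using cumulant_eq_odd_block_sum[OF sorted range L n, of \<beta>] unfolding len y_def by simp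
  also have "\<dots> \<le> fact (2 * r - 2) * (\<Prod>j\<in>{1..<2 * r}. y j ^ gap_mult j)"
    by (rule odd_block_sum_cumulant_bound[OF r y0 y1])
  also have "(\<Prod>j\<in>{1..<2 * r}. y j ^ gap_mult j) = tanh \<beta> ^ (\<Sum>j\<in>{1..<2 * r}. (i!j - i!(j - 1)) * gap_mult j)"
    unfolding y_def by (simp add: power_sum power_mult)
  also have "(\<Sum>j\<in>{1..<2 * r}. (i!j - i!(j - 1)) * gap_mult j)
             = i ! (2 * r - 1) + (\<Sum>k = 1..<r. i ! (2 * k) - i ! (2 * k - 1)) - i ! 0"
    using gap_exponent[OF sorted r] len by simp
  finally show ?thesis .
qed

end
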